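(* Let $n,k$ be positive integers. If every Latin array of order $n$ contains a partial transversal of length $k$, then every Latin array of order $n+1$ contains a partial transversal of length $k$.
   Context: A Latin array of order $n$ is an $n\times n$ matrix each of whose cells contains a symbol (from an arbitrary set of symbols), such that no symbol occurs more than once in any row or in any column. A partial transversal of length $\ell$ is a set of $\ell$ cells, no two in the same row or column, no two containing the same symbol. *)

theory Defs
  imports Main
begin

definition latin_array :: "nat \<Rightarrow> (nat \<Rightarrow> nat \<Rightarrow> nat) \<Rightarrow> bool" where
  "latin_array n L \<longleftrightarrow>
     (\<forall>i<n. \<forall>j<n. \<forall>j'<n. j \<noteq> j' \<longrightarrow> L i j \<noteq> L i j') \<and>
     (\<forall>j<n. \<forall>i<n. \<forall>i'<n. i \<noteq> i' \<longrightarrow> L i j \<noteq> L i' j)"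

definition partial_transversal :: "nat \<Rightarrow> (nat \<Rightarrow> nat \<Rightarrow> nat) \<Rightarrow> (nat \<times> nat) set \<Rightarrow> nat \<Rightarrow> bool" where
  "partial_transversal n L T l \<longleftrightarrow>
     T \<subseteq> {0..<n} \<times> {0..<n} \<and> card T = l \<and>
     (\<forall>c\<in>T. \<forall>d\<in>T. c \<noteq> d \<longrightarrow>
        fst c \<noteq> fst d \<and> snd c \<noteq> snd d \<and> L (fst c) (snd c) \<noteq> L (fst d) (snd d))"

end

theory Submission
  imports Defs
begin

lemma latin_array_restrict:
  assumes "m \<le> n" and "latin_array n L"
  shows "latin_array m L"
  using assms unfolding latin_array_def by (meson less_le_trans)

lemma partial_transversal_extend:
  assumes "m \<le> n" and "partial_transversal m L T l"
  shows "partial_transversal n L T l"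
proof -
  have "{0..<m} \<times> {0..<m} \<subseteq> {0..<n} \<times> {0..<n}"
    using assms(1) by auto
  with assms(2) show ?thesis
    unfolding partial_transversal_def by blast
qed

theorem lemma2p1:
  fixes n k :: nat
  assumes "0 < n" and "0 < k"
    and "\<forall>L. latin_array n L \<longrightarrow> (\<exists>T. partial_transversal n L T k)"
  shows "\<forall>L. latin_array (Suc n) L \<longrightarrow> (\<exists>T. partial_transversal (Suc n) L T k)"
proof (intro allI impI)
  fix L
  assume "latin_array (Suc n) L"
  then have "latin_array n L"
    using latin_array_restrict le_SucI by blast
  with assms(3) obtain T where "partial_transversal n L T k"
    by blast
  then show "\<exists>T. partial_transversal (Suc n) L T k"
    using partial_transversal_extend le_SucI by blast
qed

end
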